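(* Let $s,r,R$ be positive integers with $s\ge 2$, let $t=s-R-1$, and assume $\delta=R-rt\le 0$. Let $m\in\mathbb F_q^{s\times r}$ be the matrix whose rows $m_1,\dots,m_{R+1}$ all equal $e_1=(1,0,\dots,0)\in\mathbb F_q^{1\times r}$ and whose rows $m_{R+2},\dots,m_s$ are zero. Let $c\in\mathbb F_q^{s\times r}$ satisfy $c\in B(m,R)$ and $B(c,R)\cap B(R)=\emptyset$. Then $c_i=e_1$ for all $1\le i\le R+1$, and $\sum_{i=R+2}^{s}w(c_i)=R$.
   Context: $q$ is a prime power, $\mathbb F_q^{s\times r}$ the set of $s\times r$ matrices over $\mathbb F_q$ with rows $c_1,\dots,c_s\in\mathbb F_q^{1\times r}$. For a row $y=(y_1,\dots,y_r)$, the NRT weight is $w(y)=\max\{j: y_j\neq 0\}$ if $y\ne0$ and $w(0)=0$; for a matrix, $w(x)=\sum_i w(x_i)$. The NRT metric is $d(x,y)=w(x-y)$; $B(c,R)=\{x: d(x,c)\le R\}$, $B(R)=B(0,R)$. Note $\delta=R-rt$ equals $(r+1)(R+1)-sr-1$. *)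

theory Defs
  imports Main
begin

text \<open>Matrices in F_q^{s x r} are represented as functions nat => nat => 'a
  (row index i in {1..s}, column index j in {1..r}) that vanish outside that range.\<close>

definition mats :: "nat \<Rightarrow> nat \<Rightarrow> (nat \<Rightarrow> nat \<Rightarrow> 'a::zero) set" where
  "mats s r = {x. \<forall>i j. (i \<notin> {1..s} \<or> j \<notin> {1..r}) \<longrightarrow> x i j = 0}"

definition nrt_row_weight :: "nat \<Rightarrow> (nat \<Rightarrow> 'a::zero) \<Rightarrow> nat" where
  "nrt_row_weight r y = (if \<forall>j\<in>{1..r}. y j = 0 then 0 else Max {j\<in>{1..r}. y j \<noteq> 0})"

definition nrt_weight :: "nat \<Rightarrow> nat \<Rightarrow> (nat \<Rightarrow> nat \<Rightarrow> 'a::zero) \<Rightarrow> nat" where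
  "nrt_weight s r x = (\<Sum>i=1..s. nrt_row_weight r (x i))"

definition nrt_dist :: "nat \<Rightarrow> nat \<Rightarrow> (nat \<Rightarrow> nat \<Rightarrow> 'a::ab_group_add) \<Rightarrow> (nat \<Rightarrow> nat \<Rightarrow> 'a) \<Rightarrow> nat" where
  "nrt_dist s r x y = nrt_weight s r (\<lambda>i j. x i j - y i j)"

definition nrt_ball :: "nat \<Rightarrow> nat \<Rightarrow> (nat \<Rightarrow> nat \<Rightarrow> 'a::ab_group_add) \<Rightarrow> nat \<Rightarrow> (nat \<Rightarrow> nat \<Rightarrow> 'a) set" where
  "nrt_ball s r c R = {x \<in> mats s r. nrt_dist s r x c \<le> R}"

definition e1_row :: "nat \<Rightarrow> 'a::{zero,one}" where
  "e1_row j = (if j = 1 then 1 else 0)"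

end

theory Submission
  imports Defs
begin

text \<open>If B(c,R) misses B(R), then zeroing any set K of rows of c gives a matrix of
  weight sum_{i \<notin> K} w(c_i) at distance sum_{i \<in> K} w(c_i) from c, so one of the two
  sums exceeds R. As the row weight is ultrametric and w(e_1) = 1, every row c_i \<noteq> e_1 has
  w(c_i) \<le> w(c_i - e_1). Zeroing the rows i \<le> R+1 with c_i = e_1 therefore leaves weight at
  most d(c,m) \<le> R, so at least R+1 rows were zeroed, i.e. all of them. Then d(c,m) is the
  tail weight T \<le> R, and zeroing rows 2..R+1 gives R < 1 + T.\<close>

lemma nrt_row_weight_le_iff:
  "nrt_row_weight r y \<le> k \<longleftrightarrow> (\<forall>j\<in>{1..r}. k < j \<longrightarrow> y j = 0)"
proof (cases "\<forall>j\<in>{1..r}. y j = 0")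
  case True
  then show ?thesis by (simp add: nrt_row_weight_def)
next
  case False
  then have "{j\<in>{1..r}. y j \<noteq> 0} \<noteq> {}" by auto
  then have "Max {j\<in>{1..r}. y j \<noteq> 0} \<le> k \<longleftrightarrow> (\<forall>j\<in>{j\<in>{1..r}. y j \<noteq> 0}. j \<le> k)"
    by (simp add: Max_le_iff)
  also have "\<dots> \<longleftrightarrow> (\<forall>j\<in>{1..r}. k < j \<longrightarrow> y j = 0)" using not_less by force
  finally show ?thesis using False by (simp add: nrt_row_weight_def)
qed

lemma nrt_row_weight_eq_0_iff: "nrt_row_weight r y = 0 \<longleftrightarrow> (\<forall>j\<in>{1..r}. y j = 0)"
  using nrt_row_weight_le_iff[of r y 0] by auto

lemma nrt_row_weight_zero [simp]: "nrt_row_weight r (\<lambda>j. 0) = 0"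
  by (simp add: nrt_row_weight_def)

lemma nrt_row_weight_cong:
  assumes "\<And>j. j \<in> {1..r} \<Longrightarrow> y j = 0 \<longleftrightarrow> z j = 0"
  shows "nrt_row_weight r y = nrt_row_weight r z"
proof -
  have "nrt_row_weight r y \<le> k \<longleftrightarrow> nrt_row_weight r z \<le> k" for k
    using assms by (simp add: nrt_row_weight_le_iff)
  then show ?thesis by (meson le_antisym le_refl)
qed

lemma nrt_row_weight_uminus:
  "nrt_row_weight r (\<lambda>j. - (y j :: 'a::ab_group_add)) = nrt_row_weight r y"
  by (rule nrt_row_weight_cong) simp

lemma nrt_row_weight_add_le:
  "nrt_row_weight r (\<lambda>j. (y j :: 'a::ab_group_add) + z j)
     \<le> max (nrt_row_weight r y) (nrt_row_weight r z)"
proof -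
  have "\<forall>j\<in>{1..r}. nrt_row_weight r y < j \<longrightarrow> y j = 0"
    and "\<forall>j\<in>{1..r}. nrt_row_weight r z < j \<longrightarrow> z j = 0"
    by (simp_all flip: nrt_row_weight_le_iff del: One_nat_def)
  then show ?thesis by (simp add: nrt_row_weight_le_iff)
qed

lemma nrt_row_weight_e1_row:
  assumes "0 < r"
  shows "nrt_row_weight r (e1_row :: nat \<Rightarrow> 'a::zero_neq_one) = 1"
proof -
  have "nrt_row_weight r (e1_row :: nat \<Rightarrow> 'a) \<le> 1"
    by (simp add: nrt_row_weight_le_iff e1_row_def)
  moreover have "nrt_row_weight r (e1_row :: nat \<Rightarrow> 'a) \<noteq> 0"
    using assms by (simp add: nrt_row_weight_eq_0_iff e1_row_def)
  ultimately show ?thesis by linarith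
qed

lemma nrt_row_weight_le_diff_weight:
  fixes y z :: "nat \<Rightarrow> 'a::ab_group_add"
  assumes "nrt_row_weight r z \<le> 1" and "j \<in> {1..r}" and "y j \<noteq> z j"
  shows "nrt_row_weight r y \<le> nrt_row_weight r (\<lambda>j. y j - z j)"
proof -
  have "nrt_row_weight r (\<lambda>j. y j - z j) \<noteq> 0"
    using assms(2,3) by (auto simp: nrt_row_weight_eq_0_iff)
  moreover have "nrt_row_weight r (\<lambda>j. (y j - z j) + z j)
      \<le> max (nrt_row_weight r (\<lambda>j. y j - z j)) (nrt_row_weight r z)"
    by (rule nrt_row_weight_add_le)
  ultimately show ?thesis using assms(1) by simp
qed

lemma zero_rows_in_mats: "c \<in> mats s r \<Longrightarrow> (\<lambda>i j. if i \<in> K then 0 else c i j) \<in> mats s r"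
  by (simp add: mats_def)

lemma nrt_weight_zero_rows:
  "nrt_weight s r (\<lambda>i j. if i \<in> K then 0 else c i j)
     = (\<Sum>i\<in>{1..s} - K. nrt_row_weight r (c i))"
proof -
  have "nrt_row_weight r (\<lambda>j. if i \<in> K then 0 else c i j)
      = (if i \<in> K then 0 else nrt_row_weight r (c i))" for i
    by (simp add: nrt_row_weight_def)
  then show ?thesis
    by (simp add: nrt_weight_def sum.If_cases Diff_eq)
qed

lemma nrt_dist_zero_rows:
  "nrt_dist s r (\<lambda>i j. if i \<in> K then 0 else c i j) c
     = (\<Sum>i\<in>{1..s} \<inter> K. nrt_row_weight r (c i :: nat \<Rightarrow> 'a::ab_group_add))"
proof -
  have "nrt_row_weight r (\<lambda>j. (if i \<in> K then 0 else c i j) - c i j)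
      = (if i \<in> K then nrt_row_weight r (c i) else 0)" for i
    using nrt_row_weight_uminus[of r "c i"] by (simp add: nrt_row_weight_def)
  then show ?thesis
    by (simp add: nrt_dist_def nrt_weight_def sum.If_cases)
qed

lemma disjoint_nrt_balls_row_split:
  assumes "nrt_ball s r c R \<inter> nrt_ball s r (\<lambda>i j. 0) R = {}" and "c \<in> mats s r"
  shows "R < (\<Sum>i\<in>{1..s} - K. nrt_row_weight r (c i))
    \<or> R < (\<Sum>i\<in>{1..s} \<inter> K. nrt_row_weight r (c i))"
proof -
  let ?x = "\<lambda>i j. if i \<in> K then 0 else c i j"
  have "?x \<notin> nrt_ball s r c R \<or> ?x \<notin> nrt_ball s r (\<lambda>i j. 0) R"
    using assms(1) by blast
  moreover have "nrt_dist s r ?x (\<lambda>i j. 0) = nrt_weight s r ?x"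
    by (simp add: nrt_dist_def)
  ultimately show ?thesis
    using zero_rows_in_mats[OF assms(2)]
    by (auto simp: nrt_ball_def nrt_weight_zero_rows nrt_dist_zero_rows)
qed

definition e1_rows :: "nat \<Rightarrow> nat \<Rightarrow> nat \<Rightarrow> 'a::{zero,one}" where
  "e1_rows R = (\<lambda>i j. if 1 \<le> i \<and> i \<le> R + 1 then e1_row j else 0)"

lemma rows_eq_e1_row_if_disjoint_nrt_balls:
  fixes c :: "nat \<Rightarrow> nat \<Rightarrow> 'a::{ab_group_add,zero_neq_one}"
  assumes "0 < r" "R + 1 \<le> s" "c \<in> mats s r"
    and "c \<in> nrt_ball s r (e1_rows R) R"
    and "nrt_ball s r c R \<inter> nrt_ball s r (\<lambda>i j. 0) R = {}"
  shows "\<forall>i\<in>{1..R+1}. \<forall>j. c i j = e1_row j"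
proof -
  define J where "J = {i\<in>{1..R+1}. \<forall>j\<in>{1..r}. c i j = e1_row j}"
  have outside: "c i j = 0" if "j \<notin> {1..r}" for i j
    using assms(3) that by (simp add: mats_def)
  have "(\<Sum>i\<in>{1..s} - J. nrt_row_weight r (c i))
      \<le> (\<Sum>i\<in>{1..s} - J. nrt_row_weight r (\<lambda>j. c i j - e1_rows R i j))"
  proof (rule sum_mono)
    fix i assume i: "i \<in> {1..s} - J"
    show "nrt_row_weight r (c i) \<le> nrt_row_weight r (\<lambda>j. c i j - e1_rows R i j)"
    proof (cases "i \<le> R + 1")
      case True
      then obtain j where "j \<in> {1..r}" "c i j \<noteq> e1_row j" using i by (auto simp: J_def)
      moreover have "e1_rows R i = (e1_row :: nat \<Rightarrow> 'a)" using True i by (auto simp: e1_rows_def)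
      ultimately show ?thesis
        using nrt_row_weight_le_diff_weight[of r e1_row j "c i"]
          nrt_row_weight_e1_row[OF assms(1), where 'a='a]
        by simp
    qed (simp add: e1_rows_def)
  qed
  also have "\<dots> \<le> (\<Sum>i\<in>{1..s}. nrt_row_weight r (\<lambda>j. c i j - e1_rows R i j))"
    by (rule sum_mono2) auto
  also have "\<dots> \<le> R"
    using assms(4) by (simp add: nrt_ball_def nrt_dist_def nrt_weight_def)
  finally have "R < (\<Sum>i\<in>{1..s} \<inter> J. nrt_row_weight r (c i))"
    using disjoint_nrt_balls_row_split[OF assms(5,3), of J] by linarith
  also have "\<dots> = (\<Sum>i\<in>J. nrt_row_weight r (e1_row :: nat \<Rightarrow> 'a))"
    using assms(2) by (intro sum.cong nrt_row_weight_cong) (auto simp: J_def)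
  also have "\<dots> = card J"
    using nrt_row_weight_e1_row[OF assms(1), where 'a='a] by simp
  finally have "card {1..R+1} \<le> card J" by simp
  then have "J = {1..R+1}"
    by (intro card_seteq) (auto simp: J_def)
  show ?thesis
  proof (intro ballI allI)
    fix i j assume "i \<in> {1..R+1}"
    then have "\<forall>j\<in>{1..r}. c i j = e1_row j" using \<open>J = {1..R+1}\<close> by (auto simp: J_def)
    then show "c i j = e1_row j"
      using outside[of j i] assms(1) by (cases "j \<in> {1..r}") (auto simp: e1_row_def)
  qed
qed

lemma tail_weight_eq_if_disjoint_nrt_balls:
  fixes c :: "nat \<Rightarrow> nat \<Rightarrow> 'a::{ab_group_add,zero_neq_one}"
  assumes "0 < r" "R + 1 \<le> s" "c \<in> mats s r"
    and "c \<in> nrt_ball s r (e1_rows R) R"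
    and "nrt_ball s r c R \<inter> nrt_ball s r (\<lambda>i j. 0) R = {}"
    and rows: "\<forall>i\<in>{1..R+1}. \<forall>j. c i j = e1_row j"
  shows "(\<Sum>i=R+2..s. nrt_row_weight r (c i)) = R"
proof -
  let ?T = "\<Sum>i=R+2..s. nrt_row_weight r (c i)"
  have rows_split: "{1..s} = {1..R+1} \<union> {R+2..s}" using assms(2) by auto
  have weight_one: "nrt_row_weight r (c i) = 1" if "i \<in> {1..R+1}" for i
  proof -
    have "c i = e1_row" using rows that by blast
    then show ?thesis using nrt_row_weight_e1_row[OF assms(1), where 'a='a] by simp
  qed
  have "(\<Sum>i=1..s. nrt_row_weight r (\<lambda>j. c i j - e1_rows R i j))
      = (\<Sum>i=1..R+1. nrt_row_weight r (\<lambda>j. c i j - e1_rows R i j))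
        + (\<Sum>i=R+2..s. nrt_row_weight r (\<lambda>j. c i j - e1_rows R i j))"
    unfolding rows_split by (rule sum.union_disjoint) auto
  also have "\<dots> = ?T"
    using rows by (simp add: e1_rows_def)
  finally have "(\<Sum>i=1..s. nrt_row_weight r (\<lambda>j. c i j - e1_rows R i j)) = ?T" .
  then have "?T \<le> R"
    using assms(4) by (simp add: nrt_ball_def nrt_dist_def nrt_weight_def)
  moreover have "(\<Sum>i\<in>{1..s} - {2..R+1}. nrt_row_weight r (c i)) = 1 + ?T"
  proof -
    have "{1..s} - {2..R+1} = insert 1 {R+2..s}" using assms(2) by auto
    then show ?thesis using weight_one[of 1] by simp
  qed
  moreover have "(\<Sum>i\<in>{1..s} \<inter> {2..R+1}. nrt_row_weight r (c i)) = R"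
  proof -
    have "{1..s} \<inter> {2..R+1} = {2..R+1}" using assms(2) by auto
    moreover have "(\<Sum>i\<in>{2..R+1}. nrt_row_weight r (c i)) = R" using weight_one by simp
    ultimately show ?thesis by (simp only:)
  qed
  ultimately show ?thesis
    using disjoint_nrt_balls_row_split[OF assms(5,3), of "{2..R+1}"] by linarith
qed

theorem mainTheorem8:
  fixes s r R :: nat
    and c :: "nat \<Rightarrow> nat \<Rightarrow> 'a::{field,finite}"
  assumes "0 < s" "0 < r" "0 < R" "2 \<le> s"
    and "int R - int r * (int s - int R - 1) \<le> 0"
    and "c \<in> mats s r"
    and "c \<in> nrt_ball s r (\<lambda>i j. if 1 \<le> i \<and> i \<le> R + 1 then e1_row j else 0) R"
    and "nrt_ball s r c R \<inter> nrt_ball s r (\<lambda>i j. 0) R = {}"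
  shows "(\<forall>i\<in>{1..R+1}. \<forall>j. c i j = e1_row j) \<and> (\<Sum>i=R+2..s. nrt_row_weight r (c i)) = R"
proof -
  have s_large: "R + 1 \<le> s"
  proof (rule ccontr)
    assume "\<not> R + 1 \<le> s"
    then have "int r * (int s - int R - 1) \<le> 0" by (simp add: mult_nonneg_nonpos)
    then show False using assms(3,5) by linarith
  qed
  have ball: "c \<in> nrt_ball s r (e1_rows R) R"
    using assms(7) by (simp add: e1_rows_def)
  have rows: "\<forall>i\<in>{1..R+1}. \<forall>j. c i j = e1_row j"
    by (rule rows_eq_e1_row_if_disjoint_nrt_balls[OF assms(2) s_large assms(6) ball assms(8)])
  moreover have "(\<Sum>i=R+2..s. nrt_row_weight r (c i)) = R"
    by (rule tail_weight_eq_if_disjoint_nrt_balls[OF assms(2) s_large assms(6) ball assms(8) rows])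
  ultimately show ?thesis ..
qed

end
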